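(* Let $m\ge0$ be an integer and $\alpha\in\mathbb{R}$. For $p=(p_1,p_2)\in\mathbb{Z}^+\times\mathbb{Z}^+$ let $\varphi_p(z)=z_1^{p_1}z_2^{p_2}$ on the unit ball $\mathbb{B}^2=\{z\in\mathbb{C}^2:|z|<1\}$. Then every $\varphi_p$ has finite norm $\|\varphi_p\|_{\alpha,m}$ (i.e. belongs to $\mathcal{A}^{2,\alpha}_m(\mathbb{B}^2)$) if and only if $\alpha>-1$. Moreover, for $\alpha>-1$ the $\varphi_p$ are pairwise orthogonal in $\mathcal{A}^{2,\alpha}_m(\mathbb{B}^2)$ and $$\|\varphi_p\|_{\alpha,m}^2=\pi^2\Gamma(\alpha+1)\begin{cases}\dfrac{p!}{\Gamma(|p|+\alpha+3)}, & |p|<m,\\[2mm] \dfrac{|p|(|p|-1)\cdots(|p|-m+1)\,p!}{\Gamma(|p|-m+\alpha+3)}, & |p|\ge m.\end{cases}$$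
   Context: On $\mathbb{C}^2$, $\langle z,w\rangle=z_1\overline{w_1}+z_2\overline{w_2}$, $|z|=\sqrt{\langle z,z\rangle}$, $d\lambda$ is Lebesgue measure. For $p=(p_1,p_2)$: $|p|=p_1+p_2$, $p!=p_1!p_2!$, $D^p=\frac{\partial^{|p|}}{\partial z_1^{p_1}\partial z_2^{p_2}}$. For a holomorphic $f=\sum_pa_pz^p$ on $\mathbb{B}^2$, $f_{1,m}=\sum_{|p|<m}a_pz^p$, $f_{2,m}=\sum_{|p|\ge m}a_pz^p$, and $\|f\|_{\alpha,m}^2=\|f_{1,m}\|_\alpha^2+m!\sum_{|q|=m}\frac{1}{q!}\|D^qf_{2,m}\|_\alpha^2$, where $\|g\|_\alpha^2=\int_{\mathbb{B}^2}|g(z)|^2(1-|z|^2)^\alpha d\lambda(z)$; the inner product $\langle\cdot,\cdot\rangle_{\alpha,m}$ is defined analogously by polarization. $\mathcal{A}^{2,\alpha}_m(\mathbb{B}^2)$ is the space of holomorphic $f$ on $\mathbb{B}^2$ with $\|f\|_{\alpha,m}<\infty$. *)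

theory Defs
  imports "HOL-Analysis.Analysis"
begin

type_synonym C2 = "complex \<times> complex"

definition mabs :: "nat \<times> nat \<Rightarrow> nat" where
  "mabs p = fst p + snd p"

definition mfact :: "nat \<times> nat \<Rightarrow> real" where
  "mfact p = fact (fst p) * fact (snd p)"

definition monom :: "nat \<times> nat \<Rightarrow> C2 \<Rightarrow> complex" where
  "monom p z = fst z ^ fst p * snd z ^ snd p"

definition Dq :: "nat \<times> nat \<Rightarrow> (C2 \<Rightarrow> complex) \<Rightarrow> C2 \<Rightarrow> complex" where
  "Dq q f = (\<lambda>z. (deriv ^^ fst q) (\<lambda>w. (deriv ^^ snd q) (\<lambda>u. f (w, u)) (snd z)) (fst z))"

definition tcoeff :: "(C2 \<Rightarrow> complex) \<Rightarrow> nat \<times> nat \<Rightarrow> complex" where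
  "tcoeff f p = Dq p f 0 / of_real (mfact p)"

text \<open>f_{1,m} = sum_{|p|<m} a_p z^p and f_{2,m} = f - f_{1,m} = sum_{|p|>=m} a_p z^p.\<close>
definition low_part :: "nat \<Rightarrow> (C2 \<Rightarrow> complex) \<Rightarrow> C2 \<Rightarrow> complex" where
  "low_part m f = (\<lambda>z. \<Sum>p\<in>{p. mabs p < m}. tcoeff f p * monom p z)"

definition high_part :: "nat \<Rightarrow> (C2 \<Rightarrow> complex) \<Rightarrow> C2 \<Rightarrow> complex" where
  "high_part m f = (\<lambda>z. f z - low_part m f z)"

definition weight :: "real \<Rightarrow> C2 \<Rightarrow> real" where
  "weight \<alpha> z = (1 - (norm z)\<^sup>2) powr \<alpha>"

definition wnorm2 :: "real \<Rightarrow> (C2 \<Rightarrow> complex) \<Rightarrow> ennreal" where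
  "wnorm2 \<alpha> g = (\<integral>\<^sup>+ z \<in> ball 0 1. ennreal ((norm (g z))\<^sup>2 * weight \<alpha> z) \<partial>lborel)"

definition winner :: "real \<Rightarrow> (C2 \<Rightarrow> complex) \<Rightarrow> (C2 \<Rightarrow> complex) \<Rightarrow> complex" where
  "winner \<alpha> f g = (LINT z : ball 0 1 | lborel. f z * cnj (g z) * of_real (weight \<alpha> z))"

definition norm_am2 :: "real \<Rightarrow> nat \<Rightarrow> (C2 \<Rightarrow> complex) \<Rightarrow> ennreal" where
  "norm_am2 \<alpha> m f = wnorm2 \<alpha> (low_part m f)
     + ennreal (fact m) * (\<Sum>q\<in>{q. mabs q = m}. ennreal (1 / mfact q) * wnorm2 \<alpha> (Dq q (high_part m f)))"

definition inner_am :: "real \<Rightarrow> nat \<Rightarrow> (C2 \<Rightarrow> complex) \<Rightarrow> (C2 \<Rightarrow> complex) \<Rightarrow> complex" where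
  "inner_am \<alpha> m f g = winner \<alpha> (low_part m f) (low_part m g)
     + of_real (fact m) * (\<Sum>q\<in>{q. mabs q = m}. of_real (1 / mfact q) *
          winner \<alpha> (Dq q (high_part m f)) (Dq q (high_part m g)))"

end

theory Submission
  imports Defs
begin

text \<open>
  Multiplying one coordinate by a unimodular constant c preserves Lebesgue measure, the ball and
  the weight, and it multiplies the weighted inner product of z^p and z^p' by
  c^(p_j) * cnj(c)^(p'_j). For p \<noteq> p' some c makes this factor differ from 1, so the inner
  product vanishes; as D^q z^p is again a multiple of a monomial, the same holds in A^{2,\<alpha>}_m.

  The integrand of ||z^p||_\<alpha>^2 depends only on s = |z1|^2 and t = |z2|^2, and the image of
  Lebesgue measure on \<complex> under z \<mapsto> |z|^2 is \<pi> times Lebesgue measure on [0, \<infinity>). Hence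
  ||z^p||_\<alpha>^2 = \<pi>^2 \<integral>\<integral>_{s+t<1} s^p1 t^p2 (1-s-t)^\<alpha> ds dt, a product of two Beta integrals.
  For |p| \<ge> m the sum over |q| = m collapses by Vandermonde's identity. For \<alpha> \<le> -1 the norm
  of the constant 1 dominates \<pi>^2 / ((\<beta>+1)(\<beta>+2)) for every \<beta> > -1, so it is infinite.
\<close>

section \<open>Invariance of Lebesgue measure under unimodular scaling of a coordinate\<close>

lemma nn_integral_lborel_pair:
  fixes f :: "'a::euclidean_space \<times> 'b::euclidean_space \<Rightarrow> ennreal"
  assumes "f \<in> borel_measurable borel"
  shows "(\<integral>\<^sup>+p. f p \<partial>lborel) = (\<integral>\<^sup>+x. \<integral>\<^sup>+y. f (x, y) \<partial>lborel \<partial>lborel)"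
    and "(\<integral>\<^sup>+p. f p \<partial>lborel) = (\<integral>\<^sup>+y. \<integral>\<^sup>+x. f (x, y) \<partial>lborel \<partial>lborel)"
proof -
  have f: "f \<in> borel_measurable (lborel \<Otimes>\<^sub>M lborel)"
    using assms by (simp add: lborel_prod)
  show "(\<integral>\<^sup>+p. f p \<partial>lborel) = (\<integral>\<^sup>+x. \<integral>\<^sup>+y. f (x, y) \<partial>lborel \<partial>lborel)"
    using lborel.nn_integral_fst[OF f] by (simp add: lborel_prod)
  show "(\<integral>\<^sup>+p. f p \<partial>lborel) = (\<integral>\<^sup>+y. \<integral>\<^sup>+x. f (x, y) \<partial>lborel \<partial>lborel)"
    using lborel_pair.nn_integral_snd[OF f] by (simp add: lborel_prod)
qed

lemma distr_lborel_fiberwise_fst: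
  fixes f :: "'b::euclidean_space \<Rightarrow> 'a::euclidean_space \<Rightarrow> 'a"
  assumes inv: "\<And>y. distr lborel borel (f y) = lborel"
    and meas: "(\<lambda>(x, y). (f y x, y)) \<in> borel \<rightarrow>\<^sub>M borel"
  shows "distr lborel borel (\<lambda>(x, y). (f y x, y)) = lborel"
proof (rule measure_eqI)
  fix A :: "('a \<times> 'b) set"
  assume "A \<in> sets (distr lborel borel (\<lambda>(x, y). (f y x, y)))"
  then have [measurable]: "A \<in> sets borel" by simp
  have [measurable]: "f y \<in> borel_measurable borel" for y
  proof -
    have "(fst \<circ> (\<lambda>(x, y). (f y x, y))) \<circ> (\<lambda>x. (x, y)) \<in> borel_measurable borel"
      by (intro measurable_comp[OF _ measurable_comp[OF meas]] borel_measurable_continuous_onI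
          continuous_intros)
    then show ?thesis by (simp add: o_def)
  qed
  have "emeasure (distr lborel borel (\<lambda>(x, y). (f y x, y))) A
      = (\<integral>\<^sup>+p. indicator A ((\<lambda>(x, y). (f y x, y)) p) \<partial>lborel)"
    using meas by (simp add: emeasure_distr nn_integral_indicator[symmetric] nn_integral_distr
        del: nn_integral_indicator)
  also have "\<dots> = (\<integral>\<^sup>+y. \<integral>\<^sup>+x. indicator A (f y x, y) \<partial>lborel \<partial>lborel)"
    using meas by (subst nn_integral_lborel_pair(2)) auto
  also have "\<dots> = (\<integral>\<^sup>+y. \<integral>\<^sup>+x. indicator A (x, y) \<partial>distr lborel borel (f y) \<partial>lborel)"
    by (intro nn_integral_cong) (simp add: nn_integral_distr)
  also have "\<dots> = emeasure lborel A"
    by (simp add: inv nn_integral_lborel_pair(2)[symmetric])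
  finally show "emeasure (distr lborel borel (\<lambda>(x, y). (f y x, y))) A = emeasure lborel A" .
qed simp

lemma distr_lborel_fiberwise_snd:
  fixes f :: "'a::euclidean_space \<Rightarrow> 'b::euclidean_space \<Rightarrow> 'b"
  assumes inv: "\<And>x. distr lborel borel (f x) = lborel"
    and meas: "(\<lambda>(x, y). (x, f x y)) \<in> borel \<rightarrow>\<^sub>M borel"
  shows "distr lborel borel (\<lambda>(x, y). (x, f x y)) = lborel"
proof (rule measure_eqI)
  fix A :: "('a \<times> 'b) set"
  assume "A \<in> sets (distr lborel borel (\<lambda>(x, y). (x, f x y)))"
  then have [measurable]: "A \<in> sets borel" by simp
  have [measurable]: "f x \<in> borel_measurable borel" for x
  proof -
    have "(snd \<circ> (\<lambda>(x, y). (x, f x y))) \<circ> (\<lambda>y. (x, y)) \<in> borel_measurable borel"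
      by (intro measurable_comp[OF _ measurable_comp[OF meas]] borel_measurable_continuous_onI
          continuous_intros)
    then show ?thesis by (simp add: o_def)
  qed
  have "emeasure (distr lborel borel (\<lambda>(x, y). (x, f x y))) A
      = (\<integral>\<^sup>+p. indicator A ((\<lambda>(x, y). (x, f x y)) p) \<partial>lborel)"
    using meas by (simp add: emeasure_distr nn_integral_indicator[symmetric] nn_integral_distr
        del: nn_integral_indicator)
  also have "\<dots> = (\<integral>\<^sup>+x. \<integral>\<^sup>+y. indicator A (x, f x y) \<partial>lborel \<partial>lborel)"
    using meas by (subst nn_integral_lborel_pair(1)) auto
  also have "\<dots> = (\<integral>\<^sup>+x. \<integral>\<^sup>+y. indicator A (x, y) \<partial>distr lborel borel (f x) \<partial>lborel)"
    by (intro nn_integral_cong) (simp add: nn_integral_distr)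
  also have "\<dots> = emeasure lborel A"
    by (simp add: inv nn_integral_lborel_pair(1)[symmetric])
  finally show "emeasure (distr lborel borel (\<lambda>(x, y). (x, f x y))) A = emeasure lborel A" .
qed simp

lemma distr_lborel_shear_fst:
  "distr lborel borel (\<lambda>(x, y). (x + a * y, y)) = (lborel :: (real \<times> real) measure)"
proof (rule distr_lborel_fiberwise_fst)
  show "distr lborel borel (\<lambda>x. x + a * y) = lborel" for y
    by (subst add.commute) (rule lborel_distr_plus)
qed (unfold case_prod_beta, intro borel_measurable_continuous_onI continuous_intros)

lemma distr_lborel_shear_snd:
  "distr lborel borel (\<lambda>(x, y). (x, y + b * x)) = (lborel :: (real \<times> real) measure)"
proof (rule distr_lborel_fiberwise_snd)
  show "distr lborel borel (\<lambda>y. y + b * x) = lborel" for x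
    by (subst add.commute) (rule lborel_distr_plus)
qed (unfold case_prod_beta, intro borel_measurable_continuous_onI continuous_intros)

lemma distr_lborel_Complex:
  "distr lborel borel (\<lambda>(x, y). Complex x y) = (lborel :: complex measure)"
proof (rule lborel_eqI[symmetric])
  fix l u :: complex
  assume le: "\<And>b. b \<in> Basis \<Longrightarrow> l \<bullet> b \<le> u \<bullet> b"
  have "Re l \<le> Re u" "Im l \<le> Im u"
    using le[of 1] le[of \<i>] by (auto simp: Basis_complex_def)
  have "(\<lambda>(x, y). Complex x y) \<in> (borel :: (real \<times> real) measure) \<rightarrow>\<^sub>M borel"
    unfolding Complex_eq case_prod_beta by (intro borel_measurable_continuous_onI continuous_intros)
  moreover have "(\<lambda>(x, y). Complex x y) -` box l u = box (Re l) (Re u) \<times> box (Im l) (Im u)"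
    by (auto simp: box_def Basis_complex_def)
  ultimately have "emeasure (distr lborel borel (\<lambda>(x, y). Complex x y)) (box l u)
      = emeasure (lborel \<Otimes>\<^sub>M lborel) (box (Re l) (Re u) \<times> box (Im l) (Im u))"
    by (simp add: emeasure_distr lborel_prod)
  also have "\<dots> = (\<Prod>b\<in>Basis. (u - l) \<bullet> b)"
    using \<open>Re l \<le> Re u\<close> \<open>Im l \<le> Im u\<close>
    by (simp add: lborel.emeasure_pair_measure_Times ennreal_mult Basis_complex_def)
  finally show "emeasure (distr lborel borel (\<lambda>(x, y). Complex x y)) (box l u)
      = (\<Prod>b\<in>Basis. (u - l) \<bullet> b)" .
qed simp

lemma distr_lborel_comp:
  fixes f :: "'a::euclidean_space \<Rightarrow> 'b::euclidean_space" and g :: "'b \<Rightarrow> 'c::euclidean_space"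
  assumes "distr lborel borel f = lborel" "distr lborel borel g = lborel"
    and "f \<in> borel \<rightarrow>\<^sub>M borel" "g \<in> borel \<rightarrow>\<^sub>M borel"
  shows "distr lborel borel (g \<circ> f) = lborel"
proof -
  have "distr lborel borel (g \<circ> f) = distr (distr lborel borel f) borel g"
    using assms(3,4) by (simp add: distr_distr)
  then show ?thesis using assms(1,2) by simp
qed

lemma distr_lborel_rotation_pair:
  fixes a b :: real
  assumes unit: "a\<^sup>2 + b\<^sup>2 = 1" and "a \<noteq> -1"
  shows "distr lborel borel (\<lambda>(x, y). (a * x - b * y, b * x + a * y)) = lborel"
proof -
  define t where "t = b / (1 + a)"
  have "1 + a \<noteq> 0" using assms(2) by linarith
  then have t: "1 - t * b = a" "t * (1 + a) = b"
    using unit by (auto simp: t_def field_simps power2_eq_square)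
  define H where "H = (\<lambda>(x, y). (x + (- t) * y, y :: real))"
  define V where "V = (\<lambda>(x, y). (x :: real, y + b * x))"
  have [measurable]: "H \<in> borel \<rightarrow>\<^sub>M borel" "V \<in> borel \<rightarrow>\<^sub>M borel"
    unfolding H_def V_def case_prod_beta
    by (intro borel_measurable_continuous_onI continuous_intros)+
  \<comment> \<open>A rotation is a product of three shears.\<close>
  have "(\<lambda>(x, y). (a * x - b * y, b * x + a * y)) = H \<circ> (V \<circ> H)"
  proof (intro ext, clarify)
    fix x y :: real
    have "t * (2 - t * b) = b"
      using t by (simp add: flip: t(1))
    then have "a * x - b * y = (1 - t * b) * x - t * (2 - t * b) * y"
      using t(1) by simp
    then have "a * x - b * y = x + - t * y + - t * (y + b * (x + - t * y))"
      by (simp add: algebra_simps)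
    moreover have "b * x + a * y = y + b * (x + - t * y)"
      using t(1) by (simp add: algebra_simps flip: t(1))
    ultimately show "(a * x - b * y, b * x + a * y) = (H \<circ> (V \<circ> H)) (x, y)"
      by (simp add: H_def V_def)
  qed
  moreover have "distr lborel borel H = lborel" "distr lborel borel V = lborel"
    unfolding H_def V_def by (rule distr_lborel_shear_fst distr_lborel_shear_snd)+
  ultimately show ?thesis
    by (simp add: distr_lborel_comp)
qed

lemma distr_lborel_complex_mult:
  fixes c :: complex
  assumes "cmod c = 1"
  shows "distr lborel borel ((*) c) = lborel"
proof -
  have rotation: "distr lborel borel ((*) c) = lborel" if "cmod c = 1" "c \<noteq> -1" for c :: complex
  proof -
    define R where "R = (\<lambda>(x, y). (Re c * x - Im c * y, Im c * x + Re c * y))"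
    have "(Re c)\<^sup>2 + (Im c)\<^sup>2 = 1" "Re c \<noteq> -1"
      using that by (auto simp: cmod_def complex_eq_iff)
    then have "distr lborel borel R = lborel"
      unfolding R_def by (rule distr_lborel_rotation_pair)
    moreover have meas: "(\<lambda>(x, y). Complex x y) \<in> (borel :: (real \<times> real) measure) \<rightarrow>\<^sub>M borel"
      "R \<in> borel \<rightarrow>\<^sub>M borel" "(*) c \<in> borel \<rightarrow>\<^sub>M borel"
      unfolding R_def Complex_eq case_prod_beta
      by (intro borel_measurable_continuous_onI continuous_intros)+
    ultimately have "distr lborel borel ((\<lambda>(x, y). Complex x y) \<circ> R) = lborel"
      by (intro distr_lborel_comp distr_lborel_Complex)
    moreover have "(\<lambda>(x, y). Complex x y) \<circ> R = (*) c \<circ> (\<lambda>(x, y). Complex x y)"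
      by (auto simp: R_def complex_eq_iff)
    ultimately show ?thesis
      using meas by (simp add: distr_distr[symmetric] distr_lborel_Complex)
  qed
  show ?thesis
  proof (cases "c = -1")
    case True
    have "(*) c = (*) \<i> \<circ> (*) \<i>"
      using True by auto
    then show ?thesis
      by (simp only:) (intro distr_lborel_comp rotation borel_measurable_continuous_onI
          continuous_intros, auto simp: complex_eq_iff)
  qed (use assms rotation in auto)
qed

lemma distr_lborel_mult_fst:
  fixes c :: complex
  assumes "cmod c = 1"
  shows "distr lborel borel (\<lambda>(x, y). (c * x, y :: 'b::euclidean_space)) = lborel"
  by (rule distr_lborel_fiberwise_fst[of "\<lambda>_. (*) c", simplified])
    (simp add: distr_lborel_complex_mult[OF assms], unfold case_prod_beta,
      intro borel_measurable_continuous_onI continuous_intros)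

lemma distr_lborel_mult_snd:
  fixes c :: complex
  assumes "cmod c = 1"
  shows "distr lborel borel (\<lambda>(x :: 'a::euclidean_space, y). (x, c * y)) = lborel"
  by (rule distr_lborel_fiberwise_snd[of "\<lambda>_. (*) c", simplified])
    (simp add: distr_lborel_complex_mult[OF assms], unfold case_prod_beta,
      intro borel_measurable_continuous_onI continuous_intros)

section \<open>Orthogonality of monomials\<close>

lemma lborel_integral_eq_0_if_scaled:
  fixes F :: "'a::euclidean_space \<Rightarrow> 'b::{real_normed_field, banach, second_countable_topology}"
  assumes "distr lborel borel R = lborel" "R \<in> borel \<rightarrow>\<^sub>M borel" "F \<in> borel_measurable borel"
    and scaled: "\<And>z. F (R z) = c * F z" and "c \<noteq> 1"
  shows "integral\<^sup>L lborel F = 0"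
proof -
  have "integral\<^sup>L lborel F = integral\<^sup>L (distr lborel borel R) F"
    using assms(1) by simp
  also have "\<dots> = c * integral\<^sup>L lborel F"
    using assms(2,3) by (subst integral_distr) (auto simp: scaled)
  finally show ?thesis
    using \<open>c \<noteq> 1\<close> by (metis mult_cancel_right2)
qed

lemma exists_unit_power_cnj_power_ne_1:
  fixes a b :: nat
  assumes "a \<noteq> b"
  obtains c :: complex where "cmod c = 1" "c ^ a * cnj c ^ b \<noteq> 1"
proof
  define \<theta> where "\<theta> = pi / (real a - real b)"
  have "cis \<theta> ^ a * cnj (cis \<theta>) ^ b = cis ((real a - real b) * \<theta>)"
    by (simp only: Complex.DeMoivre cis_cnj cis_mult, rule arg_cong[where f = cis]) (simp add: algebra_simps)
  also have "\<dots> = -1"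
    using assms by (simp add: \<theta>_def)
  finally show "cis \<theta> ^ a * cnj (cis \<theta>) ^ b \<noteq> 1"
    by simp
qed simp

lemma weight_measurable [measurable]: "weight \<alpha> \<in> borel_measurable borel"
  unfolding weight_def by measurable

lemma monom_measurable [measurable]: "monom p \<in> borel_measurable borel"
  unfolding monom_def by (intro borel_measurable_continuous_onI continuous_intros)

lemma borel_measurable_cnj [measurable (raw)]:
  "f \<in> borel_measurable M \<Longrightarrow> (\<lambda>x. cnj (f x)) \<in> borel_measurable M"
  by (erule measurable_compose, intro borel_measurable_continuous_onI continuous_intros)

lemma winner_monom_orthogonal:
  assumes "p \<noteq> p'"
  shows "winner \<alpha> (monom p) (monom p') = 0"
proof -
  define F where "F = (\<lambda>z. indicator (ball 0 1) z *\<^sub>R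
    (monom p z * cnj (monom p' z) * of_real (weight \<alpha> z)))"
  have [measurable]: "ball (0 :: C2) 1 \<in> sets borel"
    by simp
  have F_meas: "F \<in> borel_measurable borel"
    unfolding F_def by measurable
  have norm_mult_unit: "norm (c * x, y) = norm (x, y)" "norm (x, c * y) = norm (x, y)"
    if "cmod c = 1" for c x y :: complex
    using that by (simp_all add: norm_Pair norm_mult)
  obtain R :: "C2 \<Rightarrow> C2" and c where R: "distr lborel borel R = lborel" "R \<in> borel \<rightarrow>\<^sub>M borel"
    "\<And>z. F (R z) = c * F z" "c \<noteq> 1"
  proof (cases "fst p = fst p'")
    case False
    then obtain c where c: "cmod c = 1" "c ^ fst p * cnj c ^ fst p' \<noteq> 1"
      by (rule exists_unit_power_cnj_power_ne_1)
    have "F (c * x, y) = (c ^ fst p * cnj c ^ fst p') * F (x, y)" for x y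
      using c(1) by (simp add: F_def monom_def weight_def indicator_def norm_mult_unit
          power_mult_distrib)
    then show thesis
      using c by (intro that[of "\<lambda>(x, y). (c * x, y)"] distr_lborel_mult_fst)
        (auto simp: case_prod_beta intro!: borel_measurable_continuous_onI continuous_intros)
  next
    case True
    with assms have "snd p \<noteq> snd p'"
      by (simp add: prod_eq_iff)
    then obtain c where c: "cmod c = 1" "c ^ snd p * cnj c ^ snd p' \<noteq> 1"
      by (rule exists_unit_power_cnj_power_ne_1)
    have "F (x, c * y) = (c ^ snd p * cnj c ^ snd p') * F (x, y)" for x y
      using c(1) by (simp add: F_def monom_def weight_def indicator_def norm_mult_unit
          power_mult_distrib)
    then show thesis
      using c by (intro that[of "\<lambda>(x, y). (x, c * y)"] distr_lborel_mult_snd)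
        (auto simp: case_prod_beta intro!: borel_measurable_continuous_onI continuous_intros)
  qed
  have "integral\<^sup>L lborel F = 0"
    by (rule lborel_integral_eq_0_if_scaled[OF R(1,2) F_meas R(3,4)])
  then show ?thesis
    by (simp add: winner_def set_lebesgue_integral_def F_def)
qed

section \<open>Weighted norms of monomials\<close>

lemma nn_integral_Beta:
  fixes x y :: real
  assumes "x > 0" "y > 0"
  shows "(\<integral>\<^sup>+t. ennreal (indicator {0..1} t * (t powr (x - 1) * (1 - t) powr (y - 1))) \<partial>lborel)
    = ennreal (Beta x y)"
proof (rule nn_integral_has_integral_lborel)
  have "((\<lambda>t. if t \<in> {0..1} then t powr (x - 1) * (1 - t) powr (y - 1) else 0) has_integral Beta x y) UNIV"
    using has_integral_Beta_real[OF assms] by (subst has_integral_restrict_UNIV)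
  then show "((\<lambda>t. indicator {0..1} t * (t powr (x - 1) * (1 - t) powr (y - 1))) has_integral Beta x y) UNIV"
    by (rule has_integral_eq[rotated]) (simp add: indicator_def)
qed (auto simp: indicator_def)

lemma nn_integral_power_mult_powr:
  fixes c \<beta> :: real
  assumes "c > 0" "\<beta> > -1"
  shows "(\<integral>\<^sup>+t. ennreal (indicator {0..c} t * (t ^ k * (c - t) powr \<beta>)) \<partial>lborel)
    = ennreal (c powr (real k + \<beta> + 1) * Beta (real k + 1) (\<beta> + 1))"
proof -
  let ?B = "\<lambda>u. ennreal (indicator {0..1} u * (u powr (real k + 1 - 1) * (1 - u) powr (\<beta> + 1 - 1)))"
  have "(\<lambda>t. ennreal (indicator {0..c} t * (t ^ k * (c - t) powr \<beta>))) \<in> borel_measurable borel"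
    by measurable
  from nn_integral_real_affine[OF this, of c 0]
  have "(\<integral>\<^sup>+t. ennreal (indicator {0..c} t * (t ^ k * (c - t) powr \<beta>)) \<partial>lborel)
      = ennreal c * (\<integral>\<^sup>+u. ennreal (indicator {0..c} (c * u) * ((c * u) ^ k * (c - c * u) powr \<beta>)) \<partial>lborel)"
    using assms(1) by simp
  also have "(\<integral>\<^sup>+u. ennreal (indicator {0..c} (c * u) * ((c * u) ^ k * (c - c * u) powr \<beta>)) \<partial>lborel)
      = (\<integral>\<^sup>+u. ennreal (c powr (real k + \<beta>)) * ?B u \<partial>lborel)"
  proof (rule nn_integral_cong_AE)
    show "AE u in lborel. ennreal (indicator {0..c} (c * u) * ((c * u) ^ k * (c - c * u) powr \<beta>))
        = ennreal (c powr (real k + \<beta>)) * ?B u"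
      using AE_lborel_singleton[of 0]
    proof eventually_elim
      case (elim u)
      show ?case
      proof (cases "u \<in> {0..1}")
        case True
        with elim have "u > 0" by simp
        moreover have "c - c * u = c * (1 - u)"
          by (simp add: algebra_simps)
        ultimately show ?thesis
          using True assms(1)
          by (simp add: powr_realpow[symmetric] powr_mult powr_add ennreal_mult'[symmetric] mult_ac)
      next
        case False
        with assms(1) have "c * u \<notin> {0..c}"
          by (auto simp: zero_le_mult_iff)
        with False show ?thesis
          by simp
      qed
    qed
  qed
  also have "\<dots> = ennreal (c powr (real k + \<beta>)) * ennreal (Beta (real k + 1) (\<beta> + 1))"
    using nn_integral_Beta[of "real k + 1" "\<beta> + 1"] assms(2)
    by (simp add: nn_integral_cmult del: ennreal_mult)
  also have "ennreal c * \<dots> = ennreal (c powr (real k + \<beta> + 1) * Beta (real k + 1) (\<beta> + 1))"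
    using assms by (simp add: Beta_def ennreal_mult[symmetric] powr_add mult_ac)
  finally show ?thesis .
qed

lemma distr_lborel_cmod_sq:
  "distr lborel borel (\<lambda>z :: complex. (cmod z)\<^sup>2) = density lborel (\<lambda>t. ennreal pi * indicator {0..} t)"
proof (rule measure_eqI_generator_eq_countable[where E = "range atMost" and \<Omega> = UNIV
      and A = "range (\<lambda>n :: nat. {..real n})"])
  have meas: "(\<lambda>z :: complex. (cmod z)\<^sup>2) \<in> borel \<rightarrow>\<^sub>M borel"
    by measurable
  have distr_atMost: "emeasure (distr lborel borel (\<lambda>z :: complex. (cmod z)\<^sup>2)) {..x}
      = ennreal (pi * max x 0)" for x :: real
  proof (cases "x \<ge> 0")
    case True
    have "(cmod z)\<^sup>2 \<le> x \<longleftrightarrow> cmod z \<le> sqrt x" for z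
      using real_sqrt_le_iff[of "(cmod z)\<^sup>2" x] by simp
    then have "(\<lambda>z :: complex. (cmod z)\<^sup>2) -` {..x} = cball 0 (sqrt x)"
      by auto
    with True meas show ?thesis
      by (simp add: emeasure_distr emeasure_cball unit_ball_vol_2)
  next
    case False
    then have "(\<lambda>z :: complex. (cmod z)\<^sup>2) -` {..x} = {}"
      by (auto dest: order_trans[OF zero_le_power2])
    with False meas show ?thesis
      by (simp add: emeasure_distr)
  qed
  show "emeasure (distr lborel borel (\<lambda>z :: complex. (cmod z)\<^sup>2)) X
      = emeasure (density lborel (\<lambda>t. ennreal pi * indicator {0..} t)) X"
    if X_range: "X \<in> range atMost" for X
  proof -
    obtain x where X: "X = {..x}"
      using X_range by auto
    have "emeasure (density lborel (\<lambda>t. ennreal pi * indicator {0..} t)) {..x}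
        = (\<integral>\<^sup>+t. ennreal pi * indicator {0..x} t \<partial>lborel)"
      by (subst emeasure_density) (auto intro!: nn_integral_cong split: split_indicator)
    also have "\<dots> = ennreal (pi * max x 0)"
      by (cases "x \<ge> 0") (auto simp: nn_integral_cmult_indicator ennreal_mult)
    finally show ?thesis
      using X distr_atMost by simp
  qed
  show "emeasure (distr lborel borel (\<lambda>z :: complex. (cmod z)\<^sup>2)) A \<noteq> \<infinity>"
    if "A \<in> range (\<lambda>n :: nat. {..real n})" for A
    using that distr_atMost by auto
  show "Int_stable (range (atMost :: real \<Rightarrow> real set))"
    by (auto simp: Int_stable_def)
  have "sets (borel :: real measure) = sigma_sets UNIV (range atMost)"
    by (subst borel_eq_atMost) simp
  then show "sets (distr lborel borel (\<lambda>z :: complex. (cmod z)\<^sup>2)) = sigma_sets UNIV (range atMost)"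
    "sets (density lborel (\<lambda>t. ennreal pi * indicator {0..} t))
      = sigma_sets UNIV (range (atMost :: real \<Rightarrow> real set))"
    by simp_all
  show "\<Union> (range (\<lambda>n :: nat. {..real n})) = UNIV"
    by (auto simp: real_arch_simple)
qed auto

lemma nn_integral_cmod_sq:
  fixes h :: "real \<Rightarrow> ennreal"
  assumes [measurable]: "h \<in> borel_measurable borel"
  shows "(\<integral>\<^sup>+z. h ((cmod z)\<^sup>2) \<partial>lborel) = (\<integral>\<^sup>+t. ennreal pi * indicator {0..} t * h t \<partial>lborel)"
proof -
  have "(\<integral>\<^sup>+z. h ((cmod z)\<^sup>2) \<partial>lborel) = (\<integral>\<^sup>+t. h t \<partial>distr lborel borel (\<lambda>z :: complex. (cmod z)\<^sup>2))"
    by (simp add: nn_integral_distr)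
  then show ?thesis
    by (simp add: distr_lborel_cmod_sq nn_integral_density)
qed

lemma nn_integral_radial_slice:
  fixes s \<alpha> :: real
  assumes "\<alpha> > -1" "s \<ge> 0"
  shows "(\<integral>\<^sup>+t. ennreal pi * indicator {0..} t
        * ennreal (indicator {..<1} (s + t) * (s ^ a * t ^ b * (1 - s - t) powr \<alpha>)) \<partial>lborel)
    = ennreal (indicator {..<1} s * (pi * s ^ a * (1 - s) powr (real b + \<alpha> + 1)
        * Beta (real b + 1) (\<alpha> + 1)))"
proof (cases "s < 1")
  case True
  \<comment> \<open>At \<open>t = 1 - s\<close> both sides vanish, the right one because \<open>0 powr \<alpha> = 0\<close>.\<close>
  have "ennreal pi * indicator {0..} t
        * ennreal (indicator {..<1} (s + t) * (s ^ a * t ^ b * (1 - s - t) powr \<alpha>))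
      = ennreal (pi * s ^ a) * ennreal (indicator {0..1 - s} t * (t ^ b * ((1 - s) - t) powr \<alpha>))" for t
    using assms(2) by (auto simp: indicator_def ennreal_mult'[symmetric] mult_ac diff_diff_eq)
  then have "(\<integral>\<^sup>+t. ennreal pi * indicator {0..} t
        * ennreal (indicator {..<1} (s + t) * (s ^ a * t ^ b * (1 - s - t) powr \<alpha>)) \<partial>lborel)
      = ennreal (pi * s ^ a) * ennreal ((1 - s) powr (real b + \<alpha> + 1) * Beta (real b + 1) (\<alpha> + 1))"
    using True assms(1) by (simp add: nn_integral_cmult nn_integral_power_mult_powr del: ennreal_mult)
  also have "\<dots> = ennreal (indicator {..<1} s * (pi * s ^ a * (1 - s) powr (real b + \<alpha> + 1)
        * Beta (real b + 1) (\<alpha> + 1)))"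
    using True assms by (simp add: Beta_def ennreal_mult'[symmetric] mult_ac)
  finally show ?thesis .
next
  case False
  then have zero: "ennreal pi * indicator {0..} t
      * ennreal (indicator {..<1} (s + t) * (s ^ a * t ^ b * (1 - s - t) powr \<alpha>)) = 0" for t
    by (auto simp: indicator_def)
  have "(\<integral>\<^sup>+t. ennreal pi * indicator {0..} t
        * ennreal (indicator {..<1} (s + t) * (s ^ a * t ^ b * (1 - s - t) powr \<alpha>)) \<partial>lborel)
      = (\<integral>\<^sup>+t. 0 \<partial>(lborel :: real measure))"
    by (rule nn_integral_cong) (rule zero)
  with False show ?thesis
    by simp
qed

lemma monom_integrand_eq:
  "ennreal ((norm (monom (a, b) z))\<^sup>2 * weight \<alpha> z) * indicator (ball 0 1) z
    = ennreal (indicator {..<1} ((cmod (fst z))\<^sup>2 + (cmod (snd z))\<^sup>2)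
      * (((cmod (fst z))\<^sup>2) ^ a * ((cmod (snd z))\<^sup>2) ^ b
        * (1 - (cmod (fst z))\<^sup>2 - (cmod (snd z))\<^sup>2) powr \<alpha>))"
proof -
  have "(norm z)\<^sup>2 = (cmod (fst z))\<^sup>2 + (cmod (snd z))\<^sup>2"
    by (simp add: norm_prod_def)
  moreover have "z \<in> ball 0 1 \<longleftrightarrow> (norm z)\<^sup>2 < 1"
    by (simp add: power_less_one_iff)
  ultimately show ?thesis
    by (simp add: monom_def weight_def indicator_def norm_mult norm_power
        power_mult_distrib power_mult[symmetric] mult_ac diff_diff_eq)
qed

lemma Beta_mult_Beta:
  assumes "\<alpha> > -1"
  shows "Beta (real b + 1) (\<alpha> + 1) * Beta (real a + 1) (real b + \<alpha> + 2)
    = fact a * fact b * Gamma (\<alpha> + 1) / Gamma (real a + real b + \<alpha> + 3)"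
proof -
  have "Gamma (real a + 1) = fact a" "Gamma (real b + 1) = fact b"
    using Gamma_fact[of a] Gamma_fact[of b] by (simp_all add: add.commute)
  moreover have "Gamma (real b + 1 + (\<alpha> + 1)) = Gamma (real b + \<alpha> + 2)"
    "Gamma (real a + 1 + (real b + \<alpha> + 2)) = Gamma (real a + real b + \<alpha> + 3)"
    by (simp_all add: add_ac)
  moreover have "Gamma (real b + \<alpha> + 2) > 0"
    using assms by (simp add: Gamma_real_pos)
  ultimately show ?thesis
    by (simp add: Beta_def mult_ac)
qed

lemma wnorm2_monom:
  assumes "\<alpha> > -1"
  shows "wnorm2 \<alpha> (monom p)
    = ennreal (pi\<^sup>2 * Gamma (\<alpha> + 1) * mfact p / Gamma (real (mabs p) + \<alpha> + 3))"
proof -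
  obtain a b where p: "p = (a, b)"
    by (cases p)
  define G where "G s t = ennreal (indicator {..<1} (s + t) * (s ^ a * t ^ b * (1 - s - t) powr \<alpha>))"
    for s t :: real
  define B where "B = Beta (real b + 1) (\<alpha> + 1)"
  have "B > 0"
    using assms by (simp add: B_def Beta_def Gamma_real_pos)
  have [measurable]: "G s \<in> borel_measurable borel" for s
    unfolding G_def by measurable
  have [measurable]: "(\<lambda>z :: C2. (cmod (fst z))\<^sup>2) \<in> borel_measurable borel"
    "(\<lambda>z :: C2. (cmod (snd z))\<^sup>2) \<in> borel_measurable borel"
    by (intro borel_measurable_continuous_onI continuous_intros)+
  have G_meas: "(\<lambda>z :: C2. G ((cmod (fst z))\<^sup>2) ((cmod (snd z))\<^sup>2)) \<in> borel_measurable borel"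
    unfolding G_def by measurable
  have integrand: "ennreal ((norm (monom p z))\<^sup>2 * weight \<alpha> z) * indicator (ball 0 1) z
      = G ((cmod (fst z))\<^sup>2) ((cmod (snd z))\<^sup>2)" for z :: C2
    unfolding G_def p by (rule monom_integrand_eq)
  have "wnorm2 \<alpha> (monom p) = (\<integral>\<^sup>+z. G ((cmod (fst z))\<^sup>2) ((cmod (snd z))\<^sup>2) \<partial>lborel)"
    by (simp add: wnorm2_def integrand)
  also have "\<dots> = (\<integral>\<^sup>+z\<^sub>1. \<integral>\<^sup>+z\<^sub>2. G ((cmod z\<^sub>1)\<^sup>2) ((cmod z\<^sub>2)\<^sup>2) \<partial>lborel \<partial>lborel)"
    using G_meas by (simp add: nn_integral_lborel_pair(1))
  also have "\<dots> = (\<integral>\<^sup>+z\<^sub>1. \<integral>\<^sup>+t. ennreal pi * indicator {0..} t * G ((cmod z\<^sub>1)\<^sup>2) t \<partial>lborel \<partial>lborel)"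
    by (intro nn_integral_cong nn_integral_cmod_sq) simp
  also have "\<dots> = (\<integral>\<^sup>+z\<^sub>1. ennreal (indicator {..<1} ((cmod z\<^sub>1)\<^sup>2)
      * (pi * ((cmod z\<^sub>1)\<^sup>2) ^ a * (1 - (cmod z\<^sub>1)\<^sup>2) powr (real b + \<alpha> + 1) * B)) \<partial>lborel)"
    using assms by (intro nn_integral_cong) (simp add: G_def B_def nn_integral_radial_slice)
  also have "\<dots> = (\<integral>\<^sup>+s. ennreal pi * indicator {0..} s
      * ennreal (indicator {..<1} s * (pi * s ^ a * (1 - s) powr (real b + \<alpha> + 1) * B)) \<partial>lborel)"
    by (rule nn_integral_cmod_sq) measurable
  also have "\<dots> = (\<integral>\<^sup>+s. ennreal (pi\<^sup>2 * B)
      * ennreal (indicator {0..1} s * (s ^ a * (1 - s) powr (real b + \<alpha> + 1))) \<partial>lborel)"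
    using \<open>B > 0\<close>
    by (intro nn_integral_cong) (auto simp: indicator_def ennreal_mult'[symmetric] power2_eq_square mult_ac)
  also have "\<dots> = ennreal (pi\<^sup>2 * B * Beta (real a + 1) (real b + \<alpha> + 2))"
    using nn_integral_power_mult_powr[of 1 "real b + \<alpha> + 1" a] assms \<open>B > 0\<close>
    by (subst nn_integral_cmult) (simp_all add: ennreal_mult'[symmetric] add_ac)
  also have "\<dots> = ennreal (pi\<^sup>2 * Gamma (\<alpha> + 1) * mfact p / Gamma (real (mabs p) + \<alpha> + 3))"
    using Beta_mult_Beta[OF assms, of b a] by (simp add: B_def p mfact_def mabs_def mult_ac)
  finally show ?thesis .
qed

section \<open>Derivatives and Taylor parts of monomials\<close>

definition falling_fact :: "nat \<Rightarrow> nat \<Rightarrow> real" where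
  "falling_fact k n = (\<Prod>i<n. real (k - i))"

lemma falling_fact_Suc: "falling_fact k (Suc n) = falling_fact k n * real (k - n)"
  by (simp add: falling_fact_def)

lemma falling_fact_eq_fact_binomial: "falling_fact k n = fact n * real (k choose n)"
proof (induction n)
  case 0
  then show ?case
    by (simp add: falling_fact_def)
next
  case (Suc n)
  have "(k - n) * (k choose n) = Suc n * (k choose Suc n)"
    by (metis binomial_absorption binomial_absorb_comp)
  then have "real (k - n) * real (k choose n) = real (Suc n) * real (k choose Suc n)"
    by (metis of_nat_mult)
  with Suc show ?case
    by (simp add: falling_fact_Suc mult_ac)
qed

lemma falling_fact_eq_0: "k < n \<Longrightarrow> falling_fact k n = 0"
  by (simp add: falling_fact_eq_fact_binomial)

lemma falling_fact_self: "falling_fact k k = fact k"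
  by (simp add: falling_fact_eq_fact_binomial)

lemma falling_fact_square_mult_fact:
  "falling_fact k j ^ 2 * fact (k - j) / fact j = fact k * real (k choose j)"
proof (cases "j \<le> k")
  case True
  have "real (fact j * fact (k - j) * (k choose j)) = fact k"
    using binomial_fact_lemma[OF True] by (metis of_nat_fact)
  then show ?thesis
    by (simp add: falling_fact_eq_fact_binomial power2_eq_square field_simps)
qed (simp add: falling_fact_eq_0)

lemma higher_deriv_cmult_power:
  "(deriv ^^ n) (\<lambda>w. c * w ^ k) = (\<lambda>w :: complex. c * of_real (falling_fact k n) * w ^ (k - n))"
proof (induction n)
  case 0
  then show ?case
    by (simp add: falling_fact_def)
next
  case (Suc n)
  have "((\<lambda>w. C * w ^ j) has_field_derivative C * (of_nat j * w ^ (j - 1))) (at w)"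
    for C w :: complex and j
    by (auto intro!: derivative_eq_intros)
  then have "deriv (\<lambda>w. C * w ^ j) = (\<lambda>w. C * of_nat j * w ^ (j - 1))" for C :: complex and j
    by (simp add: fun_eq_iff DERIV_imp_deriv mult.assoc)
  then have "(deriv ^^ Suc n) (\<lambda>w. c * w ^ k)
      = (\<lambda>w. c * of_real (falling_fact k n) * of_nat (k - n) * w ^ (k - n - 1))"
    by (simp only: funpow.simps comp_apply Suc.IH)
  then show ?case
    by (simp add: falling_fact_Suc mult.assoc)
qed

lemma Dq_monom:
  "Dq q (monom p) = (\<lambda>z. of_real (falling_fact (fst p) (fst q) * falling_fact (snd p) (snd q))
      * monom (fst p - fst q, snd p - snd q) z)"
proof
  fix z :: C2
  define K where "K = of_real (falling_fact (snd p) (snd q)) * snd z ^ (snd p - snd q)"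
  have "(deriv ^^ snd q) (\<lambda>u. monom p (w, u)) (snd z) = K * w ^ fst p" for w
    using higher_deriv_cmult_power[of "snd q" "w ^ fst p" "snd p"]
    by (simp add: monom_def K_def mult_ac)
  then have "Dq q (monom p) z = (deriv ^^ fst q) (\<lambda>w. K * w ^ fst p) (fst z)"
    by (simp only: Dq_def)
  also have "\<dots> = K * of_real (falling_fact (fst p) (fst q)) * fst z ^ (fst p - fst q)"
    by (simp only: higher_deriv_cmult_power)
  finally show "Dq q (monom p) z = of_real (falling_fact (fst p) (fst q) * falling_fact (snd p) (snd q))
      * monom (fst p - fst q, snd p - snd q) z"
    by (simp add: K_def monom_def mult_ac)
qed

lemma Dq_zero: "Dq q (\<lambda>_. 0) = (\<lambda>_. 0)"
proof -
  have "(deriv ^^ n) (\<lambda>_ :: complex. 0 :: complex) = (\<lambda>_. 0)" for n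
    by (induction n) auto
  then show ?thesis
    by (simp add: Dq_def)
qed

lemma falling_fact_mult_zero_power:
  "falling_fact k j * 0 ^ (k - j) = (if j = k then fact k else 0)"
  by (cases "j < k") (auto simp: falling_fact_eq_0 falling_fact_self)

lemma tcoeff_monom: "tcoeff (monom p) p' = (if p' = p then 1 else 0)"
proof -
  have "Dq p' (monom p) 0 = of_real ((falling_fact (fst p) (fst p') * 0 ^ (fst p - fst p'))
      * (falling_fact (snd p) (snd p') * 0 ^ (snd p - snd p')))"
    by (simp add: Dq_monom monom_def mult_ac)
  then show ?thesis
    by (auto simp: tcoeff_def mfact_def falling_fact_mult_zero_power prod_eq_iff)
qed

lemma finite_mabs_less: "finite {p. mabs p < m}"
  by (rule finite_subset[of _ "{..<m} \<times> {..<m}"]) (auto simp: mabs_def)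

lemma low_part_monom: "low_part m (monom p) = (if mabs p < m then monom p else (\<lambda>_. 0))"
proof -
  have "low_part m (monom p) z = (\<Sum>p'\<in>{p. mabs p < m}. if p' = p then monom p z else 0)" for z
    unfolding low_part_def tcoeff_monom by (intro sum.cong) auto
  then show ?thesis
    by (auto simp: sum.delta' finite_mabs_less)
qed

lemma high_part_monom: "high_part m (monom p) = (if mabs p < m then (\<lambda>_. 0) else monom p)"
  by (auto simp: high_part_def low_part_monom)

section \<open>Monomials in the space A^{2,\<alpha>}_m\<close>

lemma winner_cmult:
  "winner \<alpha> (\<lambda>z. a * f z) (\<lambda>z. b * g z) = a * cnj b * winner \<alpha> f g"
proof -
  have "winner \<alpha> (\<lambda>z. a * f z) (\<lambda>z. b * g z)
      = (\<integral>z. a * cnj b * (indicator (ball 0 1) z *\<^sub>R (f z * cnj (g z) * of_real (weight \<alpha> z))) \<partial>lborel)"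
    unfolding winner_def set_lebesgue_integral_def
    by (intro Bochner_Integration.integral_cong) (simp_all add: mult_ac)
  also have "\<dots> = a * cnj b * winner \<alpha> f g"
    unfolding winner_def set_lebesgue_integral_def by (rule integral_mult_right_zero)
  finally show ?thesis .
qed

lemma winner_zero [simp]: "winner \<alpha> (\<lambda>_. 0) g = 0" "winner \<alpha> f (\<lambda>_. 0) = 0"
  by (simp_all add: winner_def)

lemma wnorm2_cmult:
  assumes [measurable]: "f \<in> borel_measurable borel"
  shows "wnorm2 \<alpha> (\<lambda>z. c * f z) = ennreal ((cmod c)\<^sup>2) * wnorm2 \<alpha> f"
proof -
  have [measurable]: "ball (0 :: C2) 1 \<in> sets borel"
    by simp
  have "ennreal ((norm (c * f z))\<^sup>2 * weight \<alpha> z)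
      = ennreal ((cmod c)\<^sup>2) * ennreal ((norm (f z))\<^sup>2 * weight \<alpha> z)" for z
    by (cases "weight \<alpha> z \<ge> 0")
      (simp_all add: norm_mult power_mult_distrib ennreal_mult mult.assoc ennreal_neg
        mult_nonneg_nonpos)
  then show ?thesis
    by (simp add: wnorm2_def nn_integral_cmult mult.assoc)
qed

lemma norm_am2_monom:
  "norm_am2 \<alpha> m (monom p) = (if mabs p < m then wnorm2 \<alpha> (monom p)
     else ennreal (fact m) * (\<Sum>q\<in>{q. mabs q = m}. ennreal (1 / mfact q)
       * (ennreal ((falling_fact (fst p) (fst q) * falling_fact (snd p) (snd q))\<^sup>2)
         * wnorm2 \<alpha> (monom (fst p - fst q, snd p - snd q)))))"
  by (simp add: norm_am2_def low_part_monom high_part_monom Dq_monom Dq_zero wnorm2_cmult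
      wnorm2_def[of _ "\<lambda>_. 0"] norm_mult power_mult_distrib)

lemma inner_am_monom_orthogonal:
  assumes "p \<noteq> p'"
  shows "inner_am \<alpha> m (monom p) (monom p') = 0"
proof -
  have "winner \<alpha> (Dq q (high_part m (monom p))) (Dq q (high_part m (monom p'))) = 0" for q
  proof (cases "mabs p < m \<or> mabs p' < m")
    case True
    then show ?thesis
      by (auto simp: high_part_monom Dq_zero)
  next
    case False
    let ?c = "\<lambda>p. of_real (falling_fact (fst p) (fst q) * falling_fact (snd p) (snd q)) :: complex"
    have "winner \<alpha> (Dq q (monom p)) (Dq q (monom p'))
        = ?c p * cnj (?c p') * winner \<alpha> (monom (fst p - fst q, snd p - snd q))
            (monom (fst p' - fst q, snd p' - snd q))"
      by (simp only: Dq_monom winner_cmult)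
    also have "\<dots> = 0"
    proof (cases "fst q \<le> fst p \<and> snd q \<le> snd p \<and> fst q \<le> fst p' \<and> snd q \<le> snd p'")
      case True
      with assms have "(fst p - fst q, snd p - snd q) \<noteq> (fst p' - fst q, snd p' - snd q)"
        by (auto simp: prod_eq_iff)
      then show ?thesis
        by (simp add: winner_monom_orthogonal)
    qed (auto simp: falling_fact_eq_0)
    finally show ?thesis
      using False by (simp add: high_part_monom)
  qed
  moreover have "winner \<alpha> (low_part m (monom p)) (low_part m (monom p')) = 0"
    using assms by (simp add: low_part_monom winner_monom_orthogonal)
  ultimately show ?thesis
    by (simp add: inner_am_def)
qed

lemma sum_mabs_eq: "(\<Sum>q\<in>{q. mabs q = m}. g q) = (\<Sum>k\<le>m. g (k, m - k))"
proof -
  have "{q. mabs q = m} = (\<lambda>k. (k, m - k)) ` {..m}"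
    by (auto simp: mabs_def image_iff prod_eq_iff)
  moreover have "inj_on (\<lambda>k. (k, m - k)) {..m}"
    by (auto intro: inj_onI)
  ultimately show ?thesis
    by (simp add: sum.reindex)
qed

lemma sum_falling_fact_square:
  "fact m * (\<Sum>q\<in>{q. mabs q = m}. (falling_fact (fst p) (fst q) * falling_fact (snd p) (snd q))\<^sup>2
      * mfact (fst p - fst q, snd p - snd q) / mfact q)
    = falling_fact (mabs p) m * mfact p"
proof -
  have "(falling_fact (fst p) (fst q) * falling_fact (snd p) (snd q))\<^sup>2
      * mfact (fst p - fst q, snd p - snd q) / mfact q
    = mfact p * (real (fst p choose fst q) * real (snd p choose snd q))" for q
    using falling_fact_square_mult_fact[of "fst p" "fst q"] falling_fact_square_mult_fact[of "snd p" "snd q"]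
    by (simp add: mfact_def power_mult_distrib field_simps)
  then have "(\<Sum>q\<in>{q. mabs q = m}. (falling_fact (fst p) (fst q) * falling_fact (snd p) (snd q))\<^sup>2
      * mfact (fst p - fst q, snd p - snd q) / mfact q)
      = mfact p * (\<Sum>k\<le>m. real (fst p choose k) * real (snd p choose (m - k)))"
    by (simp add: sum_mabs_eq sum_distrib_left)
  also have "\<dots> = mfact p * real (mabs p choose m)"
    by (simp add: mabs_def flip: vandermonde)
  finally show ?thesis
    by (simp add: falling_fact_eq_fact_binomial)
qed

lemma norm_am2_monom_high:
  assumes "\<alpha> > -1" "m \<le> mabs p"
  shows "norm_am2 \<alpha> m (monom p) = ennreal (pi\<^sup>2 * Gamma (\<alpha> + 1)
      * falling_fact (mabs p) m * mfact p / Gamma (real (mabs p - m) + \<alpha> + 3))"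
proof -
  define K where "K = pi\<^sup>2 * Gamma (\<alpha> + 1) / Gamma (real (mabs p - m) + \<alpha> + 3)"
  define c where "c q = (falling_fact (fst p) (fst q) * falling_fact (snd p) (snd q))\<^sup>2" for q
  have "K \<ge> 0"
    using assms(1) by (simp add: K_def Gamma_real_pos less_imp_le)
  have summand: "ennreal (1 / mfact q) * (ennreal (c q) * wnorm2 \<alpha> (monom (fst p - fst q, snd p - snd q)))
      = ennreal (K * (c q * mfact (fst p - fst q, snd p - snd q) / mfact q))"
    if "mabs q = m" for q
  proof (cases "fst q \<le> fst p \<and> snd q \<le> snd p")
    case True
    with that have "mabs (fst p - fst q, snd p - snd q) = mabs p - m"
      by (auto simp: mabs_def)
    with \<open>K \<ge> 0\<close> show ?thesis
      using assms(1)
      by (simp add: wnorm2_monom K_def c_def mfact_def ennreal_mult'[symmetric] Gamma_real_pos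
          less_imp_le mult_ac)
  qed (auto simp: c_def falling_fact_eq_0)
  have "norm_am2 \<alpha> m (monom p) = ennreal (fact m) * (\<Sum>q\<in>{q. mabs q = m}.
      ennreal (1 / mfact q) * (ennreal (c q) * wnorm2 \<alpha> (monom (fst p - fst q, snd p - snd q))))"
    using assms(2) by (simp add: norm_am2_monom c_def)
  also have "\<dots> = ennreal (fact m) * (\<Sum>q\<in>{q. mabs q = m}.
      ennreal (K * (c q * mfact (fst p - fst q, snd p - snd q) / mfact q)))"
    by (simp add: summand)
  also have "\<dots> = ennreal (fact m) * ennreal (K * (\<Sum>q\<in>{q. mabs q = m}.
      c q * mfact (fst p - fst q, snd p - snd q) / mfact q))"
    using \<open>K \<ge> 0\<close> by (simp add: c_def mfact_def sum_distrib_left)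
  also have "\<dots> = ennreal (K * falling_fact (mabs p) m * mfact p)"
    using \<open>K \<ge> 0\<close> sum_falling_fact_square[of m p]
    by (simp add: c_def ennreal_mult'[symmetric] mult_ac)
  finally show ?thesis
    by (simp add: K_def)
qed

lemma norm_am2_monom_0: "norm_am2 \<alpha> m (monom (0, 0)) = wnorm2 \<alpha> (monom (0, 0))"
  by (cases m) (simp_all add: norm_am2_monom sum_mabs_eq mfact_def falling_fact_def mabs_def[of "(0, 0)"])

lemma wnorm2_antimono:
  assumes "\<alpha> \<le> \<beta>"
  shows "wnorm2 \<beta> f \<le> wnorm2 \<alpha> f"
  unfolding wnorm2_def
proof (intro nn_integral_mono)
  fix z :: C2
  have "weight \<beta> z \<le> weight \<alpha> z" if "z \<in> ball 0 1"
  proof -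
    from that have "(norm z)\<^sup>2 < 1"
      by (simp add: power_less_one_iff)
    with assms show ?thesis
      by (simp add: weight_def powr_mono')
  qed
  then show "ennreal ((norm (f z))\<^sup>2 * weight \<beta> z) * indicator (ball 0 1) z
      \<le> ennreal ((norm (f z))\<^sup>2 * weight \<alpha> z) * indicator (ball 0 1) z"
    by (cases "z \<in> ball 0 1") (auto intro!: ennreal_leI mult_left_mono)
qed

lemma wnorm2_monom_0:
  assumes "\<beta> > -1"
  shows "wnorm2 \<beta> (monom (0, 0)) = ennreal (pi\<^sup>2 / ((\<beta> + 1) * (\<beta> + 2)))"
proof -
  have "\<beta> + 1 \<notin> \<int>\<^sub>\<le>\<^sub>0" "\<beta> + 2 \<notin> \<int>\<^sub>\<le>\<^sub>0"
    using assms by (auto elim!: nonpos_Ints_cases)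
  then have "Gamma (\<beta> + 3) = (\<beta> + 1) * (\<beta> + 2) * Gamma (\<beta> + 1)"
    using Gamma_plus1[of "\<beta> + 2"] Gamma_plus1[of "\<beta> + 1"] by (simp add: add.assoc mult_ac)
  moreover have "Gamma (\<beta> + 1) \<noteq> 0"
    using Gamma_real_pos[of "\<beta> + 1"] assms by linarith
  ultimately show ?thesis
    using assms by (simp add: wnorm2_monom mfact_def mabs_def)
qed

lemma wnorm2_monom_0_infinite:
  assumes "\<alpha> \<le> -1"
  shows "wnorm2 \<alpha> (monom (0, 0)) = \<infinity>"
proof (rule ccontr)
  assume "wnorm2 \<alpha> (monom (0, 0)) \<noteq> \<infinity>"
  then obtain r where r: "wnorm2 \<alpha> (monom (0, 0)) = ennreal r" "r \<ge> 0"
    by (cases "wnorm2 \<alpha> (monom (0, 0))") auto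
  define e where "e = min 1 (pi\<^sup>2 / (2 * (r + 1)))"
  have "e > 0" "e \<le> 1"
    using r(2) by (simp_all add: e_def)
  have "r < pi\<^sup>2 / (2 * e)"
  proof -
    have "e \<le> pi\<^sup>2 / (2 * (r + 1))"
      by (simp add: e_def)
    then have "2 * e * (r + 1) \<le> pi\<^sup>2"
      using r(2) by (simp add: field_simps)
    with \<open>e > 0\<close> show ?thesis
      by (simp add: field_simps)
  qed
  also have "\<dots> \<le> pi\<^sup>2 / (e * (e + 1))"
    using \<open>e > 0\<close> \<open>e \<le> 1\<close> by (intro divide_left_mono) auto
  finally have "ennreal r < ennreal (pi\<^sup>2 / (e * (e + 1)))"
    using r(2) by (simp add: ennreal_less_iff)
  also have "\<dots> = wnorm2 (e - 1) (monom (0, 0))"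
    using \<open>e > 0\<close> wnorm2_monom_0[of "e - 1"] by (simp add: algebra_simps)
  also have "\<dots> \<le> wnorm2 \<alpha> (monom (0, 0))"
    using assms \<open>e > 0\<close> by (intro wnorm2_antimono) simp
  finally show False
    using r(1) by simp
qed

lemma norm_am2_monom_eq:
  assumes "\<alpha> > -1"
  shows "norm_am2 \<alpha> m (monom p) = ennreal (pi\<^sup>2 * Gamma (\<alpha> + 1) *
    (if mabs p < m then mfact p / Gamma (real (mabs p) + \<alpha> + 3)
     else (\<Prod>i<m. real (mabs p - i)) * mfact p / Gamma (real (mabs p - m) + \<alpha> + 3)))"
proof (cases "mabs p < m")
  case True
  with assms show ?thesis
    by (simp add: norm_am2_monom wnorm2_monom)
next
  case False
  with assms show ?thesis
    by (simp add: norm_am2_monom_high falling_fact_def mult.assoc)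
qed

theorem proposition1:
  fixes m :: nat and \<alpha> :: real
  shows "((\<forall>p::nat \<times> nat. norm_am2 \<alpha> m (monom p) < \<infinity>) \<longleftrightarrow> \<alpha> > -1)
    \<and> (\<alpha> > -1 \<longrightarrow>
         (\<forall>p p'::nat \<times> nat. p \<noteq> p' \<longrightarrow> inner_am \<alpha> m (monom p) (monom p') = 0)
       \<and> (\<forall>p::nat \<times> nat. norm_am2 \<alpha> m (monom p) =
            ennreal (pi\<^sup>2 * Gamma (\<alpha> + 1) *
              (if mabs p < m then mfact p / Gamma (real (mabs p) + \<alpha> + 3)
               else (\<Prod>i<m. real (mabs p - i)) * mfact p / Gamma (real (mabs p - m) + \<alpha> + 3)))))"
proof (intro conjI impI allI)
  show "(\<forall>p. norm_am2 \<alpha> m (monom p) < \<infinity>) \<longleftrightarrow> \<alpha> > -1"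
  proof
    assume "\<forall>p. norm_am2 \<alpha> m (monom p) < \<infinity>"
    then have "wnorm2 \<alpha> (monom (0, 0)) \<noteq> \<infinity>"
      by (metis norm_am2_monom_0 less_irrefl)
    then show "\<alpha> > -1"
      by (meson not_le wnorm2_monom_0_infinite)
  qed (simp add: norm_am2_monom_eq)
  show "inner_am \<alpha> m (monom p) (monom p') = 0" if "p \<noteq> p'" for p p'
    using that by (rule inner_am_monom_orthogonal)
  show "norm_am2 \<alpha> m (monom p) = ennreal (pi\<^sup>2 * Gamma (\<alpha> + 1) *
      (if mabs p < m then mfact p / Gamma (real (mabs p) + \<alpha> + 3)
       else (\<Prod>i<m. real (mabs p - i)) * mfact p / Gamma (real (mabs p - m) + \<alpha> + 3)))"
    if "\<alpha> > -1" for p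
    using that by (rule norm_am2_monom_eq)
qed

end
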